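(* Let $q$ be an odd prime power, $n$ a positive integer with $n\mid(q-1)$, $\lambda\in\mathbb{F}_q^{*}$ with multiplicative order dividing $\frac{q-1}{n}$, and let $\alpha_1,\dots,\alpha_n\in\mathbb{F}_q^{*}$ be the (pairwise distinct) roots of $x^n-\lambda$, i.e. $x^n-\lambda=\prod_{i=1}^n(x-\alpha_i)$, in some fixed order. Let $\ell\ge0$, $\boldsymbol\eta=(\eta_0,\dots,\eta_\ell)\in\mathbb{F}_q^{\ell+1}\setminus\{\boldsymbol0\}$, and let $k$ be an integer with $2\le k\le\frac{n-2\ell-1}{2}$. Let $\boldsymbol v=(v_1,\dots,v_n)$ with $v_i\in\{-1,1\}$ for $k\le i\le n$ and $v_i\in\mathbb{F}_q\setminus\{-1,0,1\}$ for $1\le i\le k-1$. Then the $( * )$-$(\mathcal{L},\mathcal{P})$-TGRS code $\mathcal{C}$ (defined in the context) is an LCD code, i.e. $\mathcal{C}\cap\mathcal{C}^{\perp}=\{\boldsymbol0\}$.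
   Context: The $( * )$-$(\mathcal{L},\mathcal{P})$-TGRS code is $\mathcal{C}=\{(v_1f(\alpha_1),\dots,v_nf(\alpha_n)) : f\in\mathcal{F}_{n,k,\boldsymbol\eta}\}$, where $\mathcal{F}_{n,k,\boldsymbol\eta}=\{\sum_{i=0}^{k-1}f_ix^i+f_0\sum_{j=0}^{\ell}\eta_jx^{k+j} : f_i\in\mathbb{F}_q\}$; equivalently it is generated by the $k\times n$ matrix whose first row is $\big(v_j(1+\sum_{t=0}^{\ell}\eta_t\alpha_j^{k+t})\big)_{j}$ and whose row $i$ ($1\le i\le k-1$) is $(v_j\alpha_j^{i})_j$. $\mathcal{C}^{\perp}$ is the dual with respect to the standard inner product $\langle\boldsymbol x,\boldsymbol y\rangle=\sum_i x_iy_i$. *)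

theory Defs
  imports "HOL-Computational_Algebra.Polynomial" "HOL-Library.Cardinality"
begin

text \<open>Vectors of length n are modelled as functions nat \<Rightarrow> 'a indexed by 1..n,
  and are required to vanish outside 1..n.\<close>

definition vecs :: "nat \<Rightarrow> (nat \<Rightarrow> 'a::zero) set" where
  "vecs n = {x. \<forall>j. j \<notin> {1..n} \<longrightarrow> x j = 0}"

definition tgrs_poly :: "nat \<Rightarrow> nat \<Rightarrow> (nat \<Rightarrow> 'a::comm_ring_1) \<Rightarrow> (nat \<Rightarrow> 'a) \<Rightarrow> 'a poly" where
  "tgrs_poly k l eta fc =
     (\<Sum>i<k. monom (fc i) i) + smult (fc 0) (\<Sum>j\<le>l. monom (eta j) (k + j))"

definition tgrs_code ::
  "nat \<Rightarrow> nat \<Rightarrow> nat \<Rightarrow> (nat \<Rightarrow> 'a::comm_ring_1) \<Rightarrow> (nat \<Rightarrow> 'a) \<Rightarrow> (nat \<Rightarrow> 'a) \<Rightarrow> (nat \<Rightarrow> 'a) set" where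
  "tgrs_code n k l eta alpha v =
     {(\<lambda>j. if j \<in> {1..n} then v j * poly (tgrs_poly k l eta fc) (alpha j) else 0) | fc. True}"

definition dual_code :: "nat \<Rightarrow> (nat \<Rightarrow> 'a::comm_ring_1) set \<Rightarrow> (nat \<Rightarrow> 'a) set" where
  "dual_code n C = {y \<in> vecs n. \<forall>c \<in> C. (\<Sum>j=1..n. c j * y j) = 0}"

definition is_LCD :: "nat \<Rightarrow> (nat \<Rightarrow> 'a::comm_ring_1) set \<Rightarrow> bool" where
  "is_LCD n C \<longleftrightarrow> C \<inter> dual_code n C = {(\<lambda>_. 0)}"

end

theory Submission
  imports Defs
begin

(* Write f for the polynomial of a codeword c = (v_j f(alpha_j)) and g for that of an
   arbitrary codeword. Since deg (f g) <= 2(k + l) < n and the power sums of the roots of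
   x^n - lambda vanish in degrees 1, ..., n - 1, summing f g over the roots gives n f(0) g(0).
   As v_j^2 = 1 for j >= k, orthogonality of c to the code says that for every g
     n f(0) g(0) + sum_{j<k} (v_j^2 - 1) f(alpha_j) g(alpha_j) = 0.
   The polynomials x prod_{i<k, i<>j} (x - alpha_i) lie in the code and give f(alpha_j) = 0
   for j < k; then g = 1 + sum eta_j x^(k+j) gives n f(0) = 0, where n <> 0 in F_q because
   n divides q - 1. Now f has degree < k and the k roots 0, alpha_1, ..., alpha_(k-1), so
   f = 0. The argument does not need q odd, the order of lambda, or eta <> 0. *)

lemma of_nat_CARD_eq_0: "of_nat CARD('a::{ring_1,finite}) = (0::'a)"
proof -
  have "(\<Sum>x\<in>UNIV. x) = (\<Sum>x\<in>UNIV. x + (1::'a))"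
    by (rule sum.reindex_bij_betw[symmetric]) (simp add: bij_betw_def surj_plus_right)
  then show ?thesis by (simp add: sum.distrib)
qed

lemma of_nat_neq_0_if_dvd_card_minus_1:
  assumes "n dvd CARD('a::{field,finite}) - 1"
  shows "of_nat n \<noteq> (0::'a)"
proof
  assume "of_nat n = (0::'a)"
  moreover obtain c where "CARD('a) - 1 = n * c" using assms by blast
  ultimately have "of_nat (CARD('a) - 1) = (0::'a)" by simp
  then show False using of_nat_CARD_eq_0[where 'a='a] by (simp add: of_nat_diff Suc_leI)
qed

lemma power_eq_iff_mem_roots:
  fixes alpha :: "nat \<Rightarrow> 'a::field"
  assumes "monom 1 n - [:lam:] = (\<Prod>i=1..n. [:- alpha i, 1:])"
  shows "x ^ n = lam \<longleftrightarrow> x \<in> alpha ` {1..n}"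
proof -
  have "x ^ n - lam = poly (monom 1 n - [:lam:]) x" by (simp add: poly_monom)
  also have "\<dots> = (\<Prod>i=1..n. x - alpha i)" unfolding assms by (simp add: poly_prod)
  finally have "x ^ n = lam \<longleftrightarrow> (\<Prod>i=1..n. x - alpha i) = 0" by (metis eq_iff_diff_eq_0)
  then show ?thesis by (auto simp: prod_zero_iff)
qed

lemma card_le_if_power_eq_1:
  fixes U :: "'a::idom set"
  assumes "0 < m" "\<forall>u\<in>U. u ^ m = 1"
  shows "card U \<le> m"
proof -
  define p :: "'a poly" where "p = monom 1 m - 1"
  have "coeff p m = 1" using assms(1) by (simp add: p_def coeff_monom)
  then have "p \<noteq> 0" by auto
  have "U \<subseteq> {x. poly p x = 0}" using assms(2) by (simp add: p_def poly_monom subset_eq)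
  then have "card U \<le> card {x. poly p x = 0}"
    using poly_roots_finite[OF \<open>p \<noteq> 0\<close>] by (rule card_mono[rotated])
  also have "\<dots> \<le> degree p" using \<open>p \<noteq> 0\<close> by (rule card_poly_roots_bound)
  also have "\<dots> \<le> m"
    unfolding p_def using degree_diff_le[of "monom (1::'a) m" m 1] degree_monom_le[of "1::'a" m]
    by simp
  finally show ?thesis .
qed

lemma sum_power_eq_0_if_mult_invariant:
  fixes S :: "'a::field set"
  assumes "w \<noteq> 0" "(*) w ` S = S" "w ^ m \<noteq> 1"
  shows "(\<Sum>x\<in>S. x ^ m) = 0"
proof -
  have "(\<Sum>x\<in>S. x ^ m) = (\<Sum>x\<in>(*) w ` S. x ^ m)" using assms(2) by simp
  also have "\<dots> = w ^ m * (\<Sum>x\<in>S. x ^ m)"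
    using assms(1) by (simp add: sum.reindex inj_on_def power_mult_distrib sum_distrib_left)
  finally have "(w ^ m - 1) * (\<Sum>x\<in>S. x ^ m) = 0" by (simp add: algebra_simps)
  then show ?thesis using assms(3) by simp
qed

lemma sum_roots_power_eq_0:
  fixes alpha :: "nat \<Rightarrow> 'a::field"
  assumes roots: "monom 1 n - [:lam:] = (\<Prod>i=1..n. [:- alpha i, 1:])"
    and inj: "inj_on alpha {1..n}" and "lam \<noteq> 0" and "0 < m" "m < n"
  shows "(\<Sum>i=1..n. alpha i ^ m) = 0"
proof -
  define S where "S = alpha ` {1..n}"
  have card_S: "card S = n" unfolding S_def using inj by (simp add: card_image)
  have in_S: "x \<in> S \<longleftrightarrow> x ^ n = lam" for x
    unfolding S_def using power_eq_iff_mem_roots[OF roots] by blast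
  have nonzero: "x \<noteq> 0" if "x \<in> S" for x
    using that \<open>lam \<noteq> 0\<close> \<open>m < n\<close> unfolding in_S by (auto simp: power_0_left)
  define a where "a = alpha 1"
  have "a \<in> S" using \<open>m < n\<close> by (simp add: S_def a_def)
  have "card ((\<lambda>x. x / a) ` S) = n"
    using nonzero[OF \<open>a \<in> S\<close>] card_S by (subst card_image) (auto simp: inj_on_def)
  then obtain w where "w \<in> (\<lambda>x. x / a) ` S" "w ^ m \<noteq> 1"
    using card_le_if_power_eq_1[OF \<open>0 < m\<close>, of "(\<lambda>x. x / a) ` S"] \<open>m < n\<close> by force
  then obtain y where "y \<in> S" "w = y / a" by blast
  then have "w ^ n = 1"
    using \<open>a \<in> S\<close> \<open>lam \<noteq> 0\<close> unfolding in_S by (simp add: power_divide)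
  then have "w \<noteq> 0" using \<open>m < n\<close> by (auto simp: power_0_left)
  have "(*) w ` S \<subseteq> S"
    using \<open>w ^ n = 1\<close> by (auto simp: in_S power_mult_distrib)
  moreover have "card ((*) w ` S) = card S"
    using \<open>w \<noteq> 0\<close> by (simp add: card_image inj_on_def)
  ultimately have "(*) w ` S = S"
    using card_subset_eq[of S] by (simp add: S_def)
  then have "(\<Sum>x\<in>S. x ^ m) = 0"
    using \<open>w ^ m \<noteq> 1\<close> by (rule sum_power_eq_0_if_mult_invariant[OF \<open>w \<noteq> 0\<close>])
  then show ?thesis unfolding S_def using inj by (simp add: sum.reindex)
qed

lemma sum_poly_roots_eq:
  fixes alpha :: "nat \<Rightarrow> 'a::field"
  assumes roots: "monom 1 n - [:lam:] = (\<Prod>i=1..n. [:- alpha i, 1:])"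
    and inj: "inj_on alpha {1..n}" and lam: "lam \<noteq> 0" and "degree p < n"
  shows "(\<Sum>j=1..n. poly p (alpha j)) = of_nat n * poly p 0"
proof -
  have "(\<Sum>j=1..n. poly p (alpha j)) = (\<Sum>j=1..n. \<Sum>i\<le>degree p. coeff p i * alpha j ^ i)"
    by (simp add: poly_altdef)
  also have "\<dots> = (\<Sum>i\<le>degree p. coeff p i * (\<Sum>j=1..n. alpha j ^ i))"
    by (subst sum.swap) (simp add: sum_distrib_left)
  also have "\<dots> = (\<Sum>i\<le>degree p. if i = 0 then coeff p 0 * of_nat n else 0)"
    using sum_roots_power_eq_0[OF roots inj lam] \<open>degree p < n\<close> by (intro sum.cong) auto
  also have "\<dots> = of_nat n * poly p 0" by (simp add: poly_0_coeff_0)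
  finally show ?thesis .
qed

lemma sum_weighted_evaluations_eq:
  fixes alpha v :: "nat \<Rightarrow> 'a::field" and f g :: "'a poly"
  assumes roots: "monom 1 n - [:lam:] = (\<Prod>i=1..n. [:- alpha i, 1:])"
    and inj: "inj_on alpha {1..n}" and lam: "lam \<noteq> 0"
    and deg: "degree f + degree g < n" and "k \<le> n"
    and v_pm: "\<forall>i\<in>{k..n}. v i = 1 \<or> v i = -1"
  shows "(\<Sum>j=1..n. (v j * poly f (alpha j)) * (v j * poly g (alpha j)))
    = of_nat n * poly f 0 * poly g 0
      + (\<Sum>j=1..k-1. (v j ^ 2 - 1) * poly f (alpha j) * poly g (alpha j))"
proof -
  have "degree (f * g) < n" using degree_mult_le[of f g] deg by linarith
  have "(\<Sum>j=1..n. (v j ^ 2 - 1) * poly (f * g) (alpha j))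
      = (\<Sum>j=1..k-1. (v j ^ 2 - 1) * poly (f * g) (alpha j))"
    using v_pm \<open>k \<le> n\<close> by (intro sum.mono_neutral_right) (auto simp: power2_eq_1_iff)
  moreover have "(\<Sum>j=1..n. (v j * poly f (alpha j)) * (v j * poly g (alpha j)))
      = (\<Sum>j=1..n. poly (f * g) (alpha j)) + (\<Sum>j=1..n. (v j ^ 2 - 1) * poly (f * g) (alpha j))"
    by (simp add: sum.distrib[symmetric] algebra_simps power2_eq_square)
  ultimately show ?thesis
    using sum_poly_roots_eq[OF roots inj lam \<open>degree (f * g) < n\<close>] by (simp add: mult.assoc)
qed

lemma weight_eq_0_if_annihilates_polys_vanishing_at_0:
  fixes alpha y :: "nat \<Rightarrow> 'a::field"
  assumes "finite J" "inj_on alpha J" "\<forall>j\<in>J. alpha j \<noteq> 0" "card J < k"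
    and annihilates: "\<And>g. degree g < k \<Longrightarrow> poly g 0 = 0 \<Longrightarrow> (\<Sum>j\<in>J. y j * poly g (alpha j)) = 0"
    and "j \<in> J"
  shows "y j = 0"
proof -
  define g where "g = [:0, 1:] * (\<Prod>i\<in>J-{j}. [:- alpha i, 1:])"
  have "degree g \<le> 1 + card (J - {j})"
    unfolding g_def using degree_prod_sum_le[of "J - {j}" "\<lambda>i. [:- alpha i, 1:]"] assms(1)
    by (intro order_trans[OF degree_mult_le]) (simp add: o_def)
  moreover have "0 < card J" using assms(1) \<open>j \<in> J\<close> by (auto simp: card_gt_0_iff)
  ultimately have "degree g < k" using assms(1,4) \<open>j \<in> J\<close> by (simp add: card_Diff_singleton)
  moreover have "poly g 0 = 0" by (simp add: g_def)
  ultimately have "(\<Sum>i\<in>J. y i * poly g (alpha i)) = 0" by (rule annihilates)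
  moreover have "(\<Sum>i\<in>J. y i * poly g (alpha i)) = y j * poly g (alpha j)"
    using assms(1) \<open>j \<in> J\<close>
    by (subst sum.remove[of _ j]) (auto simp: g_def poly_prod prod_zero_iff intro!: sum.neutral)
  moreover have "poly g (alpha j) \<noteq> 0"
    using assms(2,3) \<open>j \<in> J\<close> by (auto simp: g_def poly_prod prod_zero_iff assms(1) inj_on_eq_iff)
  ultimately show ?thesis by simp
qed

lemma poly_eq_0_if_roots_insert_0:
  fixes p :: "'a::field poly" and alpha :: "nat \<Rightarrow> 'a"
  assumes "finite J" "inj_on alpha J" "\<forall>j\<in>J. alpha j \<noteq> 0" "degree p \<le> card J"
    and "poly p 0 = 0" "\<forall>j\<in>J. poly p (alpha j) = 0"
  shows "p = 0"
proof (rule poly_eqI_degree[of "insert 0 (alpha ` J)"])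
  have "0 \<notin> alpha ` J" using assms(3) by auto
  then show "degree p < card (insert 0 (alpha ` J))"
    using assms(1,2,4) by (simp add: card_image)
qed (use assms(1,5,6) in \<open>auto simp: card_gt_0_iff\<close>)

lemma degree_tgrs_poly_le: "degree (tgrs_poly k l eta fc) \<le> k + l"
  unfolding tgrs_poly_def
  by (intro degree_add_le degree_sum_le order_trans[OF degree_smult_le]
      order_trans[OF degree_monom_le]) auto

lemma poly_tgrs_poly_0: "0 < k \<Longrightarrow> poly (tgrs_poly k l eta fc) 0 = fc 0"
  by (simp add: tgrs_poly_def poly_sum poly_monom power_0_left sum.delta' if_distrib cong: if_cong)

lemma tgrs_poly_coeff:
  assumes "degree g < k" "poly g 0 = 0"
  shows "tgrs_poly k l eta (coeff g) = g"
proof -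
  have "(\<Sum>i<k. monom (coeff g i) i) = g"
    using assms(1) by (intro poly_eqI) (auto simp: coeff_sum coeff_monom coeff_eq_0)
  then show ?thesis using assms(2) by (simp add: tgrs_poly_def poly_0_coeff_0)
qed

lemma degree_tgrs_poly_less:
  assumes "0 < k" "fc 0 = 0"
  shows "degree (tgrs_poly k l eta fc) < k"
proof -
  have "degree (\<Sum>i<k. monom (fc i) i) \<le> k - 1"
    by (intro degree_sum_le order_trans[OF degree_monom_le]) auto
  then show ?thesis using assms by (simp add: tgrs_poly_def)
qed

lemma tgrs_poly_eq_0_if_orthogonal_to_code:
  fixes alpha v eta fc :: "nat \<Rightarrow> 'a::field"
  assumes roots: "monom 1 n - [:lam:] = (\<Prod>i=1..n. [:- alpha i, 1:])"
    and inj: "inj_on alpha {1..n}" and lam: "lam \<noteq> 0" and n_nz: "of_nat n \<noteq> (0::'a)"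
    and "2 \<le> k" and deg: "2 * (k + l) < n"
    and v_pm: "\<forall>i\<in>{k..n}. v i = 1 \<or> v i = -1"
    and v_other: "\<forall>i\<in>{1..k-1}. v i \<notin> {-1, 0, 1}"
    and orth: "\<And>gc. (\<Sum>j=1..n. (v j * poly (tgrs_poly k l eta gc) (alpha j))
                         * (v j * poly (tgrs_poly k l eta fc) (alpha j))) = 0"
  shows "tgrs_poly k l eta fc = 0"
proof -
  define f where "f = tgrs_poly k l eta fc"
  have "k \<le> n" using deg by arith
  have alpha_nz: "alpha j \<noteq> 0" if "j \<in> {1..n}" for j
    using that power_eq_iff_mem_roots[OF roots, of "alpha j"] lam deg by (auto simp: power_0_left)
  have rel: "of_nat n * gc 0 * fc 0
      + (\<Sum>j=1..k-1. (v j ^ 2 - 1) * poly (tgrs_poly k l eta gc) (alpha j) * poly f (alpha j)) = 0"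
    for gc
  proof -
    have "degree (tgrs_poly k l eta gc) + degree f < n"
      using degree_tgrs_poly_le[of k l eta gc] degree_tgrs_poly_le[of k l eta fc] deg
      unfolding f_def by arith
    then show ?thesis
      using orth[of gc] sum_weighted_evaluations_eq[OF roots inj lam _ \<open>k \<le> n\<close> v_pm] \<open>2 \<le> k\<close>
      by (simp add: f_def poly_tgrs_poly_0)
  qed
  have f_alpha: "poly f (alpha j) = 0" if "j \<in> {1..k-1}" for j
  proof -
    have "(v j ^ 2 - 1) * poly f (alpha j) = 0"
    proof (rule weight_eq_0_if_annihilates_polys_vanishing_at_0[where J = "{1..k-1}" and k = k])
      show "inj_on alpha {1..k-1}" by (rule inj_on_subset[OF inj]) (use \<open>k \<le> n\<close> in auto)
      show "\<forall>j\<in>{1..k-1}. alpha j \<noteq> 0" using alpha_nz \<open>k \<le> n\<close> by auto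
      fix g :: "'a poly"
      assume "degree g < k" "poly g 0 = 0"
      then show "(\<Sum>i=1..k-1. (v i ^ 2 - 1) * poly f (alpha i) * poly g (alpha i)) = 0"
        using rel[of "coeff g"] by (simp add: tgrs_poly_coeff poly_0_coeff_0 mult_ac)
    qed (use that \<open>2 \<le> k\<close> in auto)
    moreover have "v j ^ 2 \<noteq> 1" using v_other that by (auto simp: power2_eq_1_iff)
    ultimately show ?thesis by simp
  qed
  have "of_nat n * fc 0 = 0"
    using rel[of "\<lambda>i. if i = 0 then 1 else 0"] f_alpha by simp
  then have "fc 0 = 0" using n_nz by simp
  have "degree f \<le> card {1..k-1}"
    using degree_tgrs_poly_less[of k fc l eta] \<open>fc 0 = 0\<close> \<open>2 \<le> k\<close> unfolding f_def by simp
  moreover have "inj_on alpha {1..k-1}" by (rule inj_on_subset[OF inj]) (use \<open>k \<le> n\<close> in auto)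
  ultimately show ?thesis unfolding f_def[symmetric]
    using alpha_nz \<open>k \<le> n\<close> \<open>fc 0 = 0\<close> \<open>2 \<le> k\<close> f_alpha
    by (intro poly_eq_0_if_roots_insert_0[where J = "{1..k-1}"]) (auto simp: f_def poly_tgrs_poly_0)
qed

theorem theorem4p1:
  fixes lam :: "'a::{field,finite}"
    and alpha v eta :: "nat \<Rightarrow> 'a"
    and n k l :: nat
  assumes q_odd: "odd CARD('a)"
    and n_pos: "0 < n"
    and n_dvd: "n dvd (CARD('a) - 1)"
    and lam_nz: "lam \<noteq> 0"
    and lam_ord: "lam ^ ((CARD('a) - 1) div n) = 1"
    and alpha_distinct: "inj_on alpha {1..n}"
    and alpha_roots: "monom 1 n - [:lam:] = (\<Prod>i=1..n. [:- alpha i, 1:])"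
    and eta_nz: "\<exists>j\<le>l. eta j \<noteq> 0"
    and k_ge: "2 \<le> k"
    and k_le: "2 * k \<le> n - 2 * l - 1" "2 * l + 1 \<le> n"
    and v_pm: "\<forall>i\<in>{k..n}. v i = 1 \<or> v i = -1"
    and v_other: "\<forall>i\<in>{1..k-1}. v i \<notin> {-1, 0, 1}"
  shows "is_LCD n (tgrs_code n k l eta alpha v)"
proof -
  let ?C = "tgrs_code n k l eta alpha v"
  have deg: "2 * (k + l) < n" using k_le by arith
  have "c = (\<lambda>_. 0)" if "c \<in> ?C" "c \<in> dual_code n ?C" for c
  proof -
    obtain fc where c: "c = (\<lambda>j. if j \<in> {1..n} then v j * poly (tgrs_poly k l eta fc) (alpha j) else 0)"
      using \<open>c \<in> ?C\<close> unfolding tgrs_code_def by blast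
    have f_eq_0: "tgrs_poly k l eta fc = 0"
    proof (rule tgrs_poly_eq_0_if_orthogonal_to_code[OF alpha_roots alpha_distinct lam_nz
          of_nat_neq_0_if_dvd_card_minus_1[OF n_dvd] k_ge deg v_pm v_other])
      fix gc
      have "(\<lambda>j. if j \<in> {1..n} then v j * poly (tgrs_poly k l eta gc) (alpha j) else 0) \<in> ?C"
        unfolding tgrs_code_def by blast
      then show "(\<Sum>j=1..n. (v j * poly (tgrs_poly k l eta gc) (alpha j))
                  * (v j * poly (tgrs_poly k l eta fc) (alpha j))) = 0"
        using \<open>c \<in> dual_code n ?C\<close> by (auto simp: dual_code_def c)
    qed
    show ?thesis unfolding c f_eq_0 by (simp add: fun_eq_iff)
  qed
  moreover have "(\<lambda>_. 0) \<in> ?C"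
    unfolding tgrs_code_def by (rule CollectI, rule exI[of _ "\<lambda>_. 0"]) (simp add: tgrs_poly_def fun_eq_iff)
  moreover have "(\<lambda>_. 0) \<in> dual_code n ?C" by (simp add: dual_code_def vecs_def)
  ultimately show ?thesis unfolding is_LCD_def by blast
qed

end
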